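(* Let $H$ be a monoid that is either a group or such that its set of non-units $H\setminus H^\times$ does not form an almost-breakable semigroup. Then $\mathcal{P}_{\mathrm{fin},1}(H)$ is UmF if and only if $H$ is either trivial or isomorphic to the group of integers modulo $2$ under addition.
   Context: For a monoid $H$, $\mathcal{P}_{\mathrm{fin},1}(H)$ denotes the set of all non-empty finite subsets of $H$ containing $1_H$, a monoid under setwise multiplication $XY=\{xy: x\in X, y\in Y\}$. $H^\times$ is the group of units of $H$. Divisibility in a monoid $M$: $x\mid_M y$ iff $y\in MxM$; $x,y$ are associated if each divides the other; proper divisor means divides but not associated. A unit-divisor divides $1_M$; otherwise it is a non-unit-divisor. An irreducible is a non-unit-divisor $a$ with $a\neq xy$ for all non-unit-divisors $x,y$ properly dividing $a$. A factorization of $x$ is a word over the irreducibles whose product is $x$. For words $\mathfrak a,\mathfrak b$, $\mathfrak a\sqsubseteq\mathfrak b$ means $\mathfrak a$ is, up to associatedness of letters, a subword (subsequence) of a permutation of $\mathfrak b$; equivalence means $\sqsubseteq$ both ways. A factorization $\mathfrak a$ of $x$ is minimal if no factorization $\mathfrak b$ of $x$ satisfies $\mathfrak b\sqsubseteq\mathfrak a\not\sqsubseteq\mathfrak b$. $M$ is UmF if every non-unit-divisor is a product of irreducibles and any two minimal factorizations of an element are equivalent. A semigroup $S$ is almost-breakable if for all $x,y\in S$, $xy\in\{x,y\}$ or $yx\in\{x,y\}$. *)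

theory Defs
  imports "HOL-Algebra.Elementary_Groups" "HOL-Library.Multiset" "HOL-Library.Sublist"
begin

definition Pfin1 :: "('a, 'b) monoid_scheme \<Rightarrow> 'a set monoid" where
  "Pfin1 H = \<lparr> carrier = {X. finite X \<and> X \<noteq> {} \<and> X \<subseteq> carrier H \<and> \<one>\<^bsub>H\<^esub> \<in> X},
              monoid.mult = (\<lambda>X Y. {x \<otimes>\<^bsub>H\<^esub> y | x y. x \<in> X \<and> y \<in> Y}),
              one = {\<one>\<^bsub>H\<^esub>} \<rparr>"

definition almost_breakable :: "('a, 'b) monoid_scheme \<Rightarrow> 'a set \<Rightarrow> bool" where
  "almost_breakable H S \<longleftrightarrow>
     (\<forall>x\<in>S. \<forall>y\<in>S. x \<otimes>\<^bsub>H\<^esub> y \<in> {x, y} \<or> y \<otimes>\<^bsub>H\<^esub> x \<in> {x, y})"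

definition almost_breakable_semigroup :: "('a, 'b) monoid_scheme \<Rightarrow> 'a set \<Rightarrow> bool" where
  "almost_breakable_semigroup H S \<longleftrightarrow>
     (\<forall>x\<in>S. \<forall>y\<in>S. x \<otimes>\<^bsub>H\<^esub> y \<in> S) \<and> almost_breakable H S"

definition mdvd :: "('a, 'b) monoid_scheme \<Rightarrow> 'a \<Rightarrow> 'a \<Rightarrow> bool" where
  "mdvd M x y \<longleftrightarrow> (\<exists>u\<in>carrier M. \<exists>v\<in>carrier M. y = u \<otimes>\<^bsub>M\<^esub> x \<otimes>\<^bsub>M\<^esub> v)"

definition massoc :: "('a, 'b) monoid_scheme \<Rightarrow> 'a \<Rightarrow> 'a \<Rightarrow> bool" where
  "massoc M x y \<longleftrightarrow> mdvd M x y \<and> mdvd M y x"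

definition mproper_dvd :: "('a, 'b) monoid_scheme \<Rightarrow> 'a \<Rightarrow> 'a \<Rightarrow> bool" where
  "mproper_dvd M x y \<longleftrightarrow> mdvd M x y \<and> \<not> massoc M x y"

definition unit_divisor :: "('a, 'b) monoid_scheme \<Rightarrow> 'a \<Rightarrow> bool" where
  "unit_divisor M x \<longleftrightarrow> mdvd M x \<one>\<^bsub>M\<^esub>"

definition non_unit_divisor :: "('a, 'b) monoid_scheme \<Rightarrow> 'a \<Rightarrow> bool" where
  "non_unit_divisor M x \<longleftrightarrow> x \<in> carrier M \<and> \<not> unit_divisor M x"

definition mirreducible :: "('a, 'b) monoid_scheme \<Rightarrow> 'a \<Rightarrow> bool" where
  "mirreducible M a \<longleftrightarrow> non_unit_divisor M a \<and>
     \<not> (\<exists>x y. non_unit_divisor M x \<and> non_unit_divisor M y \<and>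
              mproper_dvd M x a \<and> mproper_dvd M y a \<and> a = x \<otimes>\<^bsub>M\<^esub> y)"

definition wprod :: "('a, 'b) monoid_scheme \<Rightarrow> 'a list \<Rightarrow> 'a" where
  "wprod M w = foldr (\<lambda>a b. a \<otimes>\<^bsub>M\<^esub> b) w \<one>\<^bsub>M\<^esub>"

definition factorization :: "('a, 'b) monoid_scheme \<Rightarrow> 'a \<Rightarrow> 'a list \<Rightarrow> bool" where
  "factorization M x w \<longleftrightarrow> (\<forall>a\<in>set w. mirreducible M a) \<and> wprod M w = x"

definition wle :: "('a, 'b) monoid_scheme \<Rightarrow> 'a list \<Rightarrow> 'a list \<Rightarrow> bool" where
  "wle M a b \<longleftrightarrow> (\<exists>p d. mset p = mset b \<and> subseq d p \<and> list_all2 (massoc M) a d)"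

definition wequiv :: "('a, 'b) monoid_scheme \<Rightarrow> 'a list \<Rightarrow> 'a list \<Rightarrow> bool" where
  "wequiv M a b \<longleftrightarrow> wle M a b \<and> wle M b a"

definition minimal_factorization :: "('a, 'b) monoid_scheme \<Rightarrow> 'a \<Rightarrow> 'a list \<Rightarrow> bool" where
  "minimal_factorization M x a \<longleftrightarrow> factorization M x a \<and>
     \<not> (\<exists>b. factorization M x b \<and> wle M b a \<and> \<not> wle M a b)"

definition UmF :: "('a, 'b) monoid_scheme \<Rightarrow> bool" where
  "UmF M \<longleftrightarrow>
     (\<forall>x. non_unit_divisor M x \<longrightarrow> (\<exists>w. factorization M x w)) \<and>
     (\<forall>x\<in>carrier M. \<forall>a b. minimal_factorization M x a \<and> minimal_factorization M x b
                       \<longrightarrow> wequiv M a b)"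

end

theory Submission
  imports Defs
begin

text \<open>
  Every element of P_fin,1(H) contains 1, so a divisor of X is a subset of X. Hence
  associated elements are equal, {1} is the only unit-divisor, and comparing words up to
  associates is inclusion of multisets: UmF fails as soon as some X has two minimal
  factorizations with different letters. For g with g g not in {1, g}, put A = {1, g} and
  C = {1, g g}; then A A = A C or A C = A A A. For distinct non-trivial e, f with
  e f, f e not in {1, e, f}, the set {1, e, f} is irreducible and
  {1, e}{1, f} = {1, e, f}{1, f}. So in a group every non-trivial element is an involution
  and there is at most one of them, while in general every non-unit is idempotent and the
  non-units form an almost-breakable semigroup. Conversely, if H = {1, a}, the only
  irreducible is {1, a}, and minimal factorizations, being powers of one letter, are
  comparable and hence equivalent.
\<close>

lemma wprod_Nil: "wprod M [] = \<one>\<^bsub>M\<^esub>"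
  by (simp add: wprod_def)

lemma wprod_Cons: "wprod M (a # w) = a \<otimes>\<^bsub>M\<^esub> wprod M w"
  by (simp add: wprod_def)

lemma minimal_factorization_wle_imp_wequiv:
  assumes "minimal_factorization M x a" "minimal_factorization M x b" "wle M a b"
  shows "wequiv M a b"
  using assms by (auto simp: minimal_factorization_def wequiv_def)

lemma subseq_imp_mset_subseteq: "subseq xs ys \<Longrightarrow> mset xs \<subseteq># mset ys"
  by (induction rule: list_emb.induct) (auto intro: subset_mset.order_trans)

lemma carrier_integer_mod_group_2: "carrier (integer_mod_group 2) = {0, 1}"
  by (auto simp: carrier_integer_mod_group)

context monoid begin

lemma carrier_Pfin1:
  "X \<in> carrier (Pfin1 G) \<longleftrightarrow> finite X \<and> X \<noteq> {} \<and> X \<subseteq> carrier G \<and> \<one> \<in> X"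
  by (simp add: Pfin1_def)

lemma mult_Pfin1: "X \<otimes>\<^bsub>Pfin1 G\<^esub> Y = {x \<otimes> y | x y. x \<in> X \<and> y \<in> Y}"
  by (simp add: Pfin1_def)

lemma one_Pfin1: "\<one>\<^bsub>Pfin1 G\<^esub> = {\<one>}"
  by (simp add: Pfin1_def)

lemma insert_mult_Pfin1:
  "insert a A \<otimes>\<^bsub>Pfin1 G\<^esub> B = (\<lambda>b. a \<otimes> b) ` B \<union> (A \<otimes>\<^bsub>Pfin1 G\<^esub> B)"
  by (auto simp: mult_Pfin1)

lemma empty_mult_Pfin1: "{} \<otimes>\<^bsub>Pfin1 G\<^esub> B = {}"
  by (simp add: mult_Pfin1)

lemma mult_Pfin1_one_right: "X \<subseteq> carrier G \<Longrightarrow> X \<otimes>\<^bsub>Pfin1 G\<^esub> {\<one>} = X"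
  by (force simp: mult_Pfin1)

lemma mult_Pfin1_one_left: "X \<subseteq> carrier G \<Longrightarrow> {\<one>} \<otimes>\<^bsub>Pfin1 G\<^esub> X = X"
  by (force simp: mult_Pfin1)

lemma mdvd_Pfin1_imp_subset:
  assumes "X \<subseteq> carrier G" "mdvd (Pfin1 G) X Y"
  shows "X \<subseteq> Y"
proof
  fix x assume x: "x \<in> X"
  from assms(2) obtain U V where "U \<in> carrier (Pfin1 G)" "V \<in> carrier (Pfin1 G)"
    and Y: "Y = (U \<otimes>\<^bsub>Pfin1 G\<^esub> X) \<otimes>\<^bsub>Pfin1 G\<^esub> V"
    unfolding mdvd_def by blast
  then have "\<one> \<in> U" "\<one> \<in> V"
    by (simp_all add: carrier_Pfin1)
  then have "(\<one> \<otimes> x) \<otimes> \<one> \<in> Y"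
    using x unfolding Y mult_Pfin1 by blast
  then show "x \<in> Y"
    using x assms(1) by auto
qed

lemma mdvd_Pfin1_refl: "X \<in> carrier (Pfin1 G) \<Longrightarrow> mdvd (Pfin1 G) X X"
  unfolding mdvd_def
  by (rule bexI[of _ "{\<one>}"], rule bexI[of _ "{\<one>}"])
     (auto simp: mult_Pfin1_one_right mult_Pfin1_one_left carrier_Pfin1)

lemma massoc_Pfin1_iff:
  assumes "X \<in> carrier (Pfin1 G)" "Y \<in> carrier (Pfin1 G)"
  shows "massoc (Pfin1 G) X Y \<longleftrightarrow> X = Y"
  using assms mdvd_Pfin1_imp_subset mdvd_Pfin1_refl
  by (auto simp: massoc_def carrier_Pfin1)

lemma unit_divisor_Pfin1_iff:
  assumes "X \<in> carrier (Pfin1 G)"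
  shows "unit_divisor (Pfin1 G) X \<longleftrightarrow> X = {\<one>}"
proof
  assume "unit_divisor (Pfin1 G) X"
  then have "X \<subseteq> {\<one>}"
    using assms mdvd_Pfin1_imp_subset by (auto simp: unit_divisor_def one_Pfin1 carrier_Pfin1)
  then show "X = {\<one>}"
    using assms by (auto simp: carrier_Pfin1)
next
  assume "X = {\<one>}"
  then show "unit_divisor (Pfin1 G) X"
    using assms mdvd_Pfin1_refl by (simp add: unit_divisor_def one_Pfin1)
qed

lemma mirreducible_Pfin1D: "mirreducible (Pfin1 G) X \<Longrightarrow> X \<in> carrier (Pfin1 G) \<and> X \<noteq> {\<one>}"
  using unit_divisor_Pfin1_iff by (auto simp: mirreducible_def non_unit_divisor_def)

lemma mirreducible_Pfin1I:
  assumes "X \<in> carrier (Pfin1 G)" "X \<noteq> {\<one>}"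
    and "\<And>Y Z. \<lbrakk>Y \<in> carrier (Pfin1 G); Z \<in> carrier (Pfin1 G); Y \<subset> X; Z \<subset> X;
                 Y \<noteq> {\<one>}; Z \<noteq> {\<one>}\<rbrakk> \<Longrightarrow> Y \<otimes>\<^bsub>Pfin1 G\<^esub> Z \<noteq> X"
  shows "mirreducible (Pfin1 G) X"
  unfolding mirreducible_def non_unit_divisor_def mproper_dvd_def
  using assms unit_divisor_Pfin1_iff mdvd_Pfin1_imp_subset massoc_Pfin1_iff
  by (metis carrier_Pfin1 psubsetI)

lemma mirreducible_Pfin1_pair: "\<lbrakk>g \<in> carrier G; g \<noteq> \<one>\<rbrakk> \<Longrightarrow> mirreducible (Pfin1 G) {\<one>, g}"
  by (rule mirreducible_Pfin1I) (auto simp: carrier_Pfin1)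

lemma wprod_Pfin1_single: "A \<subseteq> carrier G \<Longrightarrow> wprod (Pfin1 G) [A] = A"
  by (simp add: wprod_Cons wprod_Nil one_Pfin1 mult_Pfin1_one_right)

lemma wprod_Pfin1_pair: "B \<subseteq> carrier G \<Longrightarrow> wprod (Pfin1 G) [A, B] = A \<otimes>\<^bsub>Pfin1 G\<^esub> B"
  by (simp add: wprod_Cons wprod_Nil one_Pfin1 mult_Pfin1_one_right)

lemma wle_Pfin1_iff_subseteq_mset:
  assumes a: "set a \<subseteq> carrier (Pfin1 G)" and b: "set b \<subseteq> carrier (Pfin1 G)"
  shows "wle (Pfin1 G) a b \<longleftrightarrow> mset a \<subseteq># mset b"
proof
  assume "wle (Pfin1 G) a b"
  then obtain p d where p: "mset p = mset b" and d: "subseq d p"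
    and ad: "list_all2 (massoc (Pfin1 G)) a d"
    unfolding wle_def by blast
  have "set d \<subseteq> set b"
    using set_mset_mono[OF subseq_imp_mset_subseteq[OF d]] p by (metis set_mset_mset)
  with a b have "list_all2 (=) a d"
    by (intro list.rel_mono_strong[OF ad]) (use massoc_Pfin1_iff in blast)
  then show "mset a \<subseteq># mset b"
    using subseq_imp_mset_subseteq[OF d] p by (simp add: list.rel_eq)
next
  assume ab: "mset a \<subseteq># mset b"
  obtain r where r: "mset r = mset b - mset a"
    by (metis ex_mset)
  have "mset (a @ r) = mset b"
    using r ab by simp
  moreover have "subseq a (a @ r)"
    by (rule subseq_rev_drop_many) simp
  moreover have "list_all2 (massoc (Pfin1 G)) a a"
    by (rule list.rel_refl_strong) (use a massoc_Pfin1_iff in blast)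
  ultimately show "wle (Pfin1 G) a b"
    unfolding wle_def by blast
qed

lemma factorization_Pfin1_carrier: "factorization (Pfin1 G) X a \<Longrightarrow> set a \<subseteq> carrier (Pfin1 G)"
  unfolding factorization_def using mirreducible_Pfin1D by blast

lemma minimal_factorization_Pfin1I:
  assumes a: "factorization (Pfin1 G) X a"
    and smaller: "\<And>b. \<lbrakk>mset b \<subset># mset a; set b \<subseteq> carrier (Pfin1 G)\<rbrakk> \<Longrightarrow> wprod (Pfin1 G) b \<noteq> X"
  shows "minimal_factorization (Pfin1 G) X a"
  unfolding minimal_factorization_def
proof (intro conjI a notI, elim exE conjE)
  fix b assume b: "factorization (Pfin1 G) X b" and ba: "wle (Pfin1 G) b a" "\<not> wle (Pfin1 G) a b"
  have "set a \<subseteq> carrier (Pfin1 G)" and b_carrier: "set b \<subseteq> carrier (Pfin1 G)"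
    using a b by (simp_all add: factorization_Pfin1_carrier)
  with ba have "mset b \<subset># mset a"
    by (auto simp: wle_Pfin1_iff_subseteq_mset subset_mset.less_le)
  with smaller[OF _ b_carrier] b show False
    by (simp add: factorization_def)
qed

lemma UmF_Pfin1_minimal_factorizations_mset_eq:
  assumes "UmF (Pfin1 G)" "X \<in> carrier (Pfin1 G)"
    and a: "minimal_factorization (Pfin1 G) X a" and b: "minimal_factorization (Pfin1 G) X b"
  shows "mset a = mset b"
proof -
  have "wequiv (Pfin1 G) a b"
    using assms unfolding UmF_def by blast
  moreover have "set a \<subseteq> carrier (Pfin1 G)" "set b \<subseteq> carrier (Pfin1 G)"
    using a b factorization_Pfin1_carrier by (auto simp: minimal_factorization_def)
  ultimately show ?thesis
    by (simp add: wequiv_def wle_Pfin1_iff_subseteq_mset subset_mset.eq_iff)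
qed

lemma minimal_factorization_Pfin1_pair:
  assumes Y: "mirreducible (Pfin1 G) Y" and Z: "mirreducible (Pfin1 G) Z"
    and X: "X = Y \<otimes>\<^bsub>Pfin1 G\<^esub> Z" "X \<noteq> Y" "X \<noteq> Z" "X \<noteq> {\<one>}"
  shows "minimal_factorization (Pfin1 G) X [Y, Z]"
proof (rule minimal_factorization_Pfin1I)
  have "Z \<subseteq> carrier G"
    using mirreducible_Pfin1D[OF Z] by (simp add: carrier_Pfin1)
  then show "factorization (Pfin1 G) X [Y, Z]"
    using Y Z X by (simp add: factorization_def wprod_Pfin1_pair)
next
  fix b assume b: "mset b \<subset># mset [Y, Z]" "set b \<subseteq> carrier (Pfin1 G)"
  then have "length b < 2" "set b \<subseteq> {Y, Z}"
    using mset_subset_size[OF b(1)] set_mset_mono[OF subset_mset.less_imp_le[OF b(1)]] by auto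
  then have "b = [] \<or> b = [Y] \<or> b = [Z]"
    by (cases b) auto
  then show "wprod (Pfin1 G) b \<noteq> X"
    using X b(2) by (auto simp: wprod_Nil one_Pfin1 wprod_Pfin1_single carrier_Pfin1)
qed

lemma minimal_factorization_Pfin1_cube:
  assumes A: "mirreducible (Pfin1 G) A"
    and X: "X = A \<otimes>\<^bsub>Pfin1 G\<^esub> (A \<otimes>\<^bsub>Pfin1 G\<^esub> A)"
      "X \<noteq> {\<one>}" "X \<noteq> A" "X \<noteq> A \<otimes>\<^bsub>Pfin1 G\<^esub> A"
  shows "minimal_factorization (Pfin1 G) X [A, A, A]"
proof (rule minimal_factorization_Pfin1I)
  have "A \<subseteq> carrier G"
    using mirreducible_Pfin1D[OF A] by (simp add: carrier_Pfin1)
  then show "factorization (Pfin1 G) X [A, A, A]"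
    using A X by (simp add: factorization_def wprod_Cons wprod_Nil one_Pfin1 mult_Pfin1_one_right)
next
  fix b assume b: "mset b \<subset># mset [A, A, A]" "set b \<subseteq> carrier (Pfin1 G)"
  then have "length b < 3" "set b \<subseteq> {A}"
    using mset_subset_size[OF b(1)] set_mset_mono[OF subset_mset.less_imp_le[OF b(1)]] by auto
  then have "b = [] \<or> b = [A] \<or> b = [A, A]"
    by (cases b rule: rev_cases; cases "butlast b" rule: rev_cases) auto
  then show "wprod (Pfin1 G) b \<noteq> X"
    using X b(2) by (auto simp: wprod_Nil one_Pfin1 wprod_Pfin1_single wprod_Pfin1_pair carrier_Pfin1)
qed

lemma UmF_Pfin1_square:
  assumes UmF: "UmF (Pfin1 G)" and g: "g \<in> carrier G" "g \<noteq> \<one>"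
  shows "g \<otimes> g = \<one> \<or> g \<otimes> g = g"
proof (rule ccontr)
  assume g2: "\<not> (g \<otimes> g = \<one> \<or> g \<otimes> g = g)"
  define A where "A = {\<one>, g}"
  define C where "C = {\<one>, g \<otimes> g}"
  have A: "mirreducible (Pfin1 G) A"
    using g mirreducible_Pfin1_pair by (simp add: A_def)
  have C: "mirreducible (Pfin1 G) C"
    using g g2 mirreducible_Pfin1_pair by (simp add: C_def)
  have AA: "A \<otimes>\<^bsub>Pfin1 G\<^esub> A = {\<one>, g, g \<otimes> g}"
    using g by (auto simp: A_def insert_mult_Pfin1 empty_mult_Pfin1)
  have "A \<noteq> C"
    using g g2 by (auto simp: A_def C_def)
  show False
  proof (cases "g \<otimes> (g \<otimes> g) \<in> {\<one>, g, g \<otimes> g}")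
    case True
    define X where "X = {\<one>, g, g \<otimes> g}"
    have "X = A \<otimes>\<^bsub>Pfin1 G\<^esub> C"
      using g True by (auto simp: X_def A_def C_def insert_mult_Pfin1 empty_mult_Pfin1)
    then have "minimal_factorization (Pfin1 G) X [A, C]"
      using g g2 by (intro minimal_factorization_Pfin1_pair A C) (auto simp: X_def A_def C_def)
    moreover have "minimal_factorization (Pfin1 G) X [A, A]"
      using g g2 AA by (intro minimal_factorization_Pfin1_pair A) (auto simp: X_def A_def)
    moreover have "X \<in> carrier (Pfin1 G)"
      using g by (simp add: X_def carrier_Pfin1)
    ultimately show False
      using UmF_Pfin1_minimal_factorizations_mset_eq[OF UmF] \<open>A \<noteq> C\<close> by fastforce
  next
    case False
    define X where "X = {\<one>, g, g \<otimes> g, g \<otimes> (g \<otimes> g)}"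
    have AAA: "A \<otimes>\<^bsub>Pfin1 G\<^esub> (A \<otimes>\<^bsub>Pfin1 G\<^esub> A) = X"
      using g AA by (auto simp: X_def A_def insert_mult_Pfin1 empty_mult_Pfin1)
    have "X = A \<otimes>\<^bsub>Pfin1 G\<^esub> C"
      using g by (auto simp: X_def A_def C_def insert_mult_Pfin1 empty_mult_Pfin1)
    then have "minimal_factorization (Pfin1 G) X [A, C]"
      using g False by (intro minimal_factorization_Pfin1_pair A C) (auto simp: X_def A_def C_def)
    moreover have "minimal_factorization (Pfin1 G) X [A, A, A]"
      using g False AA AAA by (intro minimal_factorization_Pfin1_cube A) (auto simp: X_def A_def)
    moreover have "X \<in> carrier (Pfin1 G)"
      using g by (simp add: X_def carrier_Pfin1)
    ultimately show False
      using UmF_Pfin1_minimal_factorizations_mset_eq[OF UmF] by fastforce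
  qed
qed

lemma mirreducible_Pfin1_triple:
  assumes c: "e \<in> carrier G" "f \<in> carrier G" and n: "e \<noteq> \<one>" "f \<noteq> \<one>" "e \<noteq> f"
    and ee: "e \<otimes> e \<in> {\<one>, e}" and ff: "f \<otimes> f \<in> {\<one>, f}"
    and ef: "e \<otimes> f \<notin> {\<one>, e, f}" and fe: "f \<otimes> e \<notin> {\<one>, e, f}"
  shows "mirreducible (Pfin1 G) {\<one>, e, f}"
proof -
  define E where "E = {\<one>, e}"
  define F where "F = {\<one>, f}"
  define S where "S = {\<one>, e, f}"
  have factor_of_S: "Y = E \<or> Y = F" if "Y \<in> carrier (Pfin1 G)" "Y \<subset> S" "Y \<noteq> {\<one>}" for Y
  proof -
    have "\<one> \<in> Y"
      using that(1) by (simp add: carrier_Pfin1)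
    then show ?thesis
      using that(2,3) unfolding S_def E_def F_def by blast
  qed
  have "E \<otimes>\<^bsub>Pfin1 G\<^esub> E \<subseteq> E" "F \<otimes>\<^bsub>Pfin1 G\<^esub> F \<subseteq> F"
    using c ee ff by (auto simp: E_def F_def insert_mult_Pfin1 empty_mult_Pfin1)
  moreover have "e \<otimes> f \<in> E \<otimes>\<^bsub>Pfin1 G\<^esub> F" "f \<otimes> e \<in> F \<otimes>\<^bsub>Pfin1 G\<^esub> E"
    by (auto simp: E_def F_def insert_mult_Pfin1)
  moreover have "e \<in> S" "f \<in> S" "e \<notin> F" "f \<notin> E" "e \<otimes> f \<notin> S" "f \<otimes> e \<notin> S"
    using n ef fe by (auto simp: S_def E_def F_def)
  ultimately have products_of_factors: "Y \<otimes>\<^bsub>Pfin1 G\<^esub> Z \<noteq> S"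
    if "Y \<in> {E, F}" "Z \<in> {E, F}" for Y Z
    using that by blast
  have "mirreducible (Pfin1 G) S"
  proof (rule mirreducible_Pfin1I)
    show "S \<in> carrier (Pfin1 G)" "S \<noteq> {\<one>}"
      using c n by (auto simp: S_def carrier_Pfin1)
    fix Y Z
    assume "Y \<in> carrier (Pfin1 G)" "Z \<in> carrier (Pfin1 G)" "Y \<subset> S" "Z \<subset> S"
      "Y \<noteq> {\<one>}" "Z \<noteq> {\<one>}"
    then have "Y \<in> {E, F}" "Z \<in> {E, F}"
      using factor_of_S by blast+
    then show "Y \<otimes>\<^bsub>Pfin1 G\<^esub> Z \<noteq> S"
      by (rule products_of_factors)
  qed
  then show ?thesis
    by (simp add: S_def)
qed

lemma UmF_Pfin1_mult_distinct:
  assumes UmF: "UmF (Pfin1 G)" and c: "e \<in> carrier G" "f \<in> carrier G"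
    and n: "e \<noteq> \<one>" "f \<noteq> \<one>" "e \<noteq> f"
  shows "e \<otimes> f \<in> {\<one>, e, f} \<or> f \<otimes> e \<in> {\<one>, e, f}"
proof (rule ccontr)
  assume "\<not> ?thesis"
  then have ef: "e \<otimes> f \<notin> {\<one>, e, f}" and fe: "f \<otimes> e \<notin> {\<one>, e, f}"
    by auto
  have ee: "e \<otimes> e \<in> {\<one>, e}" and ff: "f \<otimes> f \<in> {\<one>, f}"
    using UmF_Pfin1_square[OF UmF] c n by auto
  define E where "E = {\<one>, e}"
  define F where "F = {\<one>, f}"
  define S where "S = {\<one>, e, f}"
  define X where "X = {\<one>, e, f, e \<otimes> f}"
  have E: "mirreducible (Pfin1 G) E" and F: "mirreducible (Pfin1 G) F"
    using c n mirreducible_Pfin1_pair by (simp_all add: E_def F_def)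
  have S: "mirreducible (Pfin1 G) S"
    using mirreducible_Pfin1_triple[OF c n ee ff ef fe] by (simp add: S_def)
  have "X = E \<otimes>\<^bsub>Pfin1 G\<^esub> F"
    using c by (auto simp: X_def E_def F_def insert_mult_Pfin1 empty_mult_Pfin1)
  then have "minimal_factorization (Pfin1 G) X [E, F]"
    using n ef by (intro minimal_factorization_Pfin1_pair E F) (auto simp: X_def E_def F_def)
  moreover have "X = S \<otimes>\<^bsub>Pfin1 G\<^esub> F"
    using c ff by (auto simp: X_def S_def F_def insert_mult_Pfin1 empty_mult_Pfin1)
  then have "minimal_factorization (Pfin1 G) X [S, F]"
    using n ef by (intro minimal_factorization_Pfin1_pair S F) (auto simp: X_def S_def F_def)
  moreover have "X \<in> carrier (Pfin1 G)"
    using c by (simp add: X_def carrier_Pfin1)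
  moreover have "E \<noteq> S"
    using n by (auto simp: E_def S_def)
  ultimately show False
    using UmF_Pfin1_minimal_factorizations_mset_eq[OF UmF] by fastforce
qed

lemma UmF_Pfin1_if_carrier_subset_pair:
  assumes a: "carrier G \<subseteq> {\<one>, a}"
  shows "UmF (Pfin1 G)"
proof -
  define T where "T = {\<one>, a}"
  have carrier_Pfin1_cases: "X = {\<one>} \<or> X = T" if "X \<in> carrier (Pfin1 G)" for X
  proof -
    have "\<one> \<in> X" "X \<subseteq> T"
      using that a by (auto simp: T_def carrier_Pfin1)
    then show ?thesis
      unfolding T_def by blast
  qed
  have irreducible_eq_T: "Y = T" if "mirreducible (Pfin1 G) Y" for Y
    using mirreducible_Pfin1D[OF that] carrier_Pfin1_cases by blast
  have "\<exists>w. factorization (Pfin1 G) X w" if "non_unit_divisor (Pfin1 G) X" for X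
  proof -
    have "X \<in> carrier (Pfin1 G)" "X \<noteq> {\<one>}"
      using that unit_divisor_Pfin1_iff by (auto simp: non_unit_divisor_def)
    then have "X = T" "a \<in> carrier G" "a \<noteq> \<one>"
      using carrier_Pfin1_cases by (auto simp: T_def carrier_Pfin1)
    then have "factorization (Pfin1 G) X [T]"
      using mirreducible_Pfin1_pair by (simp add: factorization_def wprod_Pfin1_single T_def)
    then show ?thesis ..
  qed
  moreover have "wequiv (Pfin1 G) v w"
    if v: "minimal_factorization (Pfin1 G) X v" and w: "minimal_factorization (Pfin1 G) X w"
    for X v w
  proof -
    have fv: "factorization (Pfin1 G) X v" and fw: "factorization (Pfin1 G) X w"
      using v w by (simp_all add: minimal_factorization_def)
    then have "v = replicate (length v) T" "w = replicate (length w) T"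
      using irreducible_eq_T by (metis factorization_def replicate_length_same)+
    moreover have "set v \<subseteq> carrier (Pfin1 G)" "set w \<subseteq> carrier (Pfin1 G)"
      using fv fw by (simp_all add: factorization_Pfin1_carrier)
    ultimately have "wle (Pfin1 G) v w \<or> wle (Pfin1 G) w v"
      by (metis wle_Pfin1_iff_subseteq_mset mset_replicate replicate_mset_msubseteq_iff nle_le)
    then show ?thesis
      using v w minimal_factorization_wle_imp_wequiv by (metis wequiv_def)
  qed
  ultimately show ?thesis
    unfolding UmF_def by blast
qed

lemma iso_integer_mod_group_2D:
  assumes "G \<cong> integer_mod_group 2"
  shows "\<exists>a. a \<noteq> \<one> \<and> a \<otimes> a = \<one> \<and> carrier G = {\<one>, a}"
proof -
  obtain h where hom: "h \<in> hom G (integer_mod_group 2)" and bij: "bij_betw h (carrier G) {0, 1}"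
    using assms unfolding is_iso_def iso_def carrier_integer_mod_group_2 by blast
  have h_mult: "h (x \<otimes> y) = (h x + h y) mod 2" if "x \<in> carrier G" "y \<in> carrier G" for x y
    using hom that by (simp add: hom_def)
  have inj: "inj_on h (carrier G)" and img: "h ` carrier G = {0, 1}"
    using bij by (simp_all add: bij_betw_def)
  have h_range: "h x = 0 \<or> h x = 1" if "x \<in> carrier G" for x
    using img that by blast
  have "h \<one> = (h \<one> + h \<one>) mod 2"
    using h_mult[of \<one> \<one>] by simp
  then have h_one: "h \<one> = 0"
    using h_range[of \<one>] by auto
  obtain a where a: "a \<in> carrier G" "h a = 1"
    using img by (metis imageE insertI1 insertI2)
  have "h (a \<otimes> a) = h \<one>"
    using h_mult[OF a(1) a(1)] a h_one by simp
  then have "a \<otimes> a = \<one>"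
    using inj a by (simp add: inj_on_def)
  moreover have "x \<in> {\<one>, a}" if "x \<in> carrier G" for x
  proof -
    have "h x = h \<one> \<or> h x = h a"
      using h_range[OF that] h_one a by simp
    then show ?thesis
      using that a inj by (auto simp: inj_on_def)
  qed
  then have "carrier G = {\<one>, a}"
    using a by blast
  moreover have "a \<noteq> \<one>"
    using a h_one by auto
  ultimately show ?thesis
    by blast
qed

lemma iso_integer_mod_group_2I:
  assumes a: "a \<noteq> \<one>" "a \<otimes> a = \<one>" "carrier G = {\<one>, a}"
  shows "G \<cong> integer_mod_group 2"
proof -
  define h where "h = (\<lambda>x. if x = \<one> then 0 else 1 :: int)"
  have "h \<in> hom G (integer_mod_group 2)"
    using a by (auto simp: hom_def h_def carrier_integer_mod_group_2)
  moreover have "bij_betw h (carrier G) (carrier (integer_mod_group 2))"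
    using a by (auto simp: bij_betw_def h_def inj_on_def carrier_integer_mod_group_2)
  ultimately show ?thesis
    unfolding is_iso_def iso_def by blast
qed

lemma right_invertible_idempotent_eq_one:
  assumes "e \<in> carrier G" "e \<otimes> e = e" "z \<in> carrier G" "e \<otimes> z = \<one>"
  shows "e = \<one>"
proof -
  have "e = e \<otimes> (e \<otimes> z)"
    using assms by simp
  also have "\<dots> = (e \<otimes> e) \<otimes> z"
    using assms(1,3) by (simp add: m_assoc)
  also have "\<dots> = \<one>"
    using assms by simp
  finally show ?thesis .
qed

lemma UmF_Pfin1_imp_almost_breakable_nonunits:
  assumes UmF: "UmF (Pfin1 G)"
  shows "almost_breakable_semigroup G (carrier G - Units G)"
proof -
  have nonunit_idem: "e \<otimes> e = e" if "e \<in> carrier G - Units G" for e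
  proof -
    have "e \<noteq> \<one>" "e \<otimes> e \<noteq> \<one>"
      using that by (auto simp: Units_def)
    then show ?thesis
      using UmF_Pfin1_square[OF UmF] that by blast
  qed
  have no_right_inverse: "e \<otimes> z \<noteq> \<one>" if "e \<in> carrier G - Units G" "z \<in> carrier G" for e z
    using right_invertible_idempotent_eq_one nonunit_idem that by (metis DiffD1 DiffD2 Units_one_closed)
  have closed: "x \<otimes> y \<in> carrier G - Units G"
    if x: "x \<in> carrier G - Units G" and y: "y \<in> carrier G - Units G" for x y
  proof (rule ccontr)
    assume "x \<otimes> y \<notin> carrier G - Units G"
    then obtain u where u: "u \<in> carrier G" "(x \<otimes> y) \<otimes> u = \<one>"
      using x y by (auto simp: Units_def)
    then have "x \<otimes> (y \<otimes> u) = \<one>"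
      using x y by (simp add: m_assoc)
    then show False
      using no_right_inverse[OF x] y u by blast
  qed
  have "e \<otimes> f \<in> {e, f} \<or> f \<otimes> e \<in> {e, f}"
    if e: "e \<in> carrier G - Units G" and f: "f \<in> carrier G - Units G" for e f
  proof (cases "e = f")
    case True
    then show ?thesis
      using nonunit_idem e by simp
  next
    case False
    have "e \<noteq> \<one>" "f \<noteq> \<one>"
      using e f by auto
    then have "e \<otimes> f \<in> {\<one>, e, f} \<or> f \<otimes> e \<in> {\<one>, e, f}"
      using UmF_Pfin1_mult_distinct[OF UmF] e f False by blast
    then show ?thesis
      using no_right_inverse e f by blast
  qed
  with closed show ?thesis
    unfolding almost_breakable_semigroup_def almost_breakable_def by blast
qed

end

lemma (in group) UmF_Pfin1_imp_trivial_or_integer_mod_group_2: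
  assumes UmF: "UmF (Pfin1 G)"
  shows "carrier G = {\<one>} \<or> G \<cong> integer_mod_group 2"
proof (cases "carrier G = {\<one>}")
  case False
  then obtain x where x: "x \<in> carrier G" "x \<noteq> \<one>"
    using one_closed by blast
  have involution: "g \<otimes> g = \<one>" if "g \<in> carrier G" "g \<noteq> \<one>" for g
    using UmF_Pfin1_square[OF UmF that] that by auto
  have product_of_involutions: "a \<otimes> b \<notin> {\<one>, a, b}"
    if "a \<in> carrier G" "b \<in> carrier G" "a \<noteq> \<one>" "b \<noteq> \<one>" "a \<noteq> b" for a b
  proof -
    have "a \<otimes> b \<noteq> a \<otimes> a"
      using that by (simp add: Units_eq)
    then show ?thesis
      using that involution[of a] by auto
  qed
  have "y \<in> {\<one>, x}" if y: "y \<in> carrier G" for y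
  proof (rule ccontr)
    assume "y \<notin> {\<one>, x}"
    then show False
      using UmF_Pfin1_mult_distinct[OF UmF x(1) y x(2)] product_of_involutions[OF x(1) y]
        product_of_involutions[OF y x(1)] x by auto
  qed
  then have "carrier G = {\<one>, x}"
    using x by blast
  then show ?thesis
    using iso_integer_mod_group_2I involution x by blast
qed simp

theorem corollary3p7:
  fixes H :: "('a, 'b) monoid_scheme"
  assumes "monoid H"
    and "group H \<or> \<not> almost_breakable_semigroup H (carrier H - Units H)"
  shows "UmF (Pfin1 H) \<longleftrightarrow> carrier H = {\<one>\<^bsub>H\<^esub>} \<or> H \<cong> integer_mod_group 2"
proof
  assume "carrier H = {\<one>\<^bsub>H\<^esub>} \<or> H \<cong> integer_mod_group 2"
  then obtain a where "carrier H \<subseteq> {\<one>\<^bsub>H\<^esub>, a}"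
    using monoid.iso_integer_mod_group_2D[OF assms(1)] by blast
  then show "UmF (Pfin1 H)"
    by (rule monoid.UmF_Pfin1_if_carrier_subset_pair[OF assms(1)])
next
  assume "UmF (Pfin1 H)"
  then show "carrier H = {\<one>\<^bsub>H\<^esub>} \<or> H \<cong> integer_mod_group 2"
    using assms group.UmF_Pfin1_imp_trivial_or_integer_mod_group_2
      monoid.UmF_Pfin1_imp_almost_breakable_nonunits
    by blast
qed

end
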